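(* Let $L_{n+1},\dots,L_{n+m}\ge 0$ be nonnegative random risks and let $E_{n+1},\dots,E_{n+m}$ be random variables with $E_{n+j}\ge 0$ a.s. and $\mathbb{E}[E_{n+j}L_{n+j}]\le 1$ for every $j\in\{1,\dots,m\}$. Fix $\alpha\in(0,1)$ and let $\hat\tau=\max\{\tau\in\{1,\dots,m\}:\sum_{j=1}^m\mathbf{1}\{E_{n+j}\ge m/(\alpha\tau)\}\ge\tau\}$ (with $\hat\tau=0$ if this set is empty), and set $\hat\psi_{n+j}=\mathbf{1}\{E_{n+j}\ge m/(\alpha\hat\tau)\}$ if $\hat\tau>0$ and $\hat\psi_{n+j}=0$ for all $j$ if $\hat\tau=0$ (this is the e-BH procedure at level $\alpha$). Then $$\mathbb{E}\Big[\frac{\sum_{j=1}^m L_{n+j}\hat\psi_{n+j}}{1\vee\sum_{j=1}^m\hat\psi_{n+j}}\Big]\le\alpha.$$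
   Context: The left-hand side is the selective deployment risk (SDR) of the decisions $\hat\psi_{n+1},\dots,\hat\psi_{n+m}$. *)

theory Defs
  imports "HOL-Probability.Probability"
begin

definition ebh_tau :: "real \<Rightarrow> nat \<Rightarrow> (nat \<Rightarrow> real) \<Rightarrow> nat" where
  "ebh_tau \<alpha> m e =
     (let S = {\<tau> \<in> {1..m}. card {j \<in> {1..m}. e j \<ge> real m / (\<alpha> * real \<tau>)} \<ge> \<tau>}
      in if S = {} then 0 else Max S)"

definition ebh_psi :: "real \<Rightarrow> nat \<Rightarrow> (nat \<Rightarrow> real) \<Rightarrow> nat \<Rightarrow> real" where
  "ebh_psi \<alpha> m e j =
     (let t = ebh_tau \<alpha> m e
      in if t > 0 \<and> e j \<ge> real m / (\<alpha> * real t) then 1 else 0)"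

end

theory Submission
  imports Defs
begin

text \<open>
  On the event that e-BH rejects the set \<open>R\<close> with threshold index \<open>\<tau> > 0\<close>, every
  rejected \<open>j\<close> has \<open>E\<^sub>j \<ge> m / (\<alpha> \<tau>)\<close> and \<open>|R| \<ge> \<tau>\<close>. Hence, pointwise,
  \<open>\<Sum>\<^sub>j\<^sub>\<in>\<^sub>R L\<^sub>j / |R| \<le> \<Sum>\<^sub>j\<^sub>\<in>\<^sub>R L\<^sub>j / \<tau> \<le> (\<alpha>/m) \<Sum>\<^sub>j\<^sub>\<in>\<^sub>R E\<^sub>j L\<^sub>j \<le> (\<alpha>/m) \<Sum>\<^sub>j (E\<^sub>j L\<^sub>j)\<^sup>+\<close>.
  Taking expectations and using \<open>\<bbbE>[E\<^sub>j L\<^sub>j] \<le> 1\<close> for each of the \<open>m\<close> terms gives the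
  bound \<open>\<alpha>\<close>; no dependence structure between the e-values is needed. Neither is \<open>\<alpha> < 1\<close>,
  nor \<open>E\<^sub>j \<ge> 0\<close>, since the embedding into \<open>ennreal\<close> truncates \<open>E\<^sub>j L\<^sub>j\<close> at \<open>0\<close>.
\<close>

definition ebh_rejections :: "real \<Rightarrow> nat \<Rightarrow> (nat \<Rightarrow> real) \<Rightarrow> nat set" where
  "ebh_rejections \<alpha> m e =
     {j \<in> {1..m}. 0 < ebh_tau \<alpha> m e \<and> real m / (\<alpha> * real (ebh_tau \<alpha> m e)) \<le> e j}"

lemma ebh_rejections_subset: "ebh_rejections \<alpha> m e \<subseteq> {1..m}"
  unfolding ebh_rejections_def by auto

lemma ebh_psi_eq_indicator:
  assumes "j \<in> {1..m}"
  shows "ebh_psi \<alpha> m e j = of_bool (j \<in> ebh_rejections \<alpha> m e)"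
  using assms unfolding ebh_psi_def ebh_rejections_def Let_def by auto

lemma ebh_tau_le_card_rejections: "ebh_tau \<alpha> m e \<le> card (ebh_rejections \<alpha> m e)"
proof (cases "ebh_tau \<alpha> m e = 0")
  case False
  define S where "S = {\<tau> \<in> {1..m}. card {j \<in> {1..m}. e j \<ge> real m / (\<alpha> * real \<tau>)} \<ge> \<tau>}"
  have tau: "ebh_tau \<alpha> m e = (if S = {} then 0 else Max S)"
    unfolding ebh_tau_def S_def Let_def by simp
  with False have "S \<noteq> {}" by auto
  moreover have "finite S" unfolding S_def by simp
  ultimately have "ebh_tau \<alpha> m e \<in> S" using tau by simp
  with False show ?thesis unfolding S_def ebh_rejections_def by simp
qed simp

lemma ebh_rejected_e_ge:
  assumes "j \<in> ebh_rejections \<alpha> m e"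
  shows "0 < ebh_tau \<alpha> m e" and "real m / (\<alpha> * real (ebh_tau \<alpha> m e)) \<le> e j"
  using assms unfolding ebh_rejections_def by auto

lemma sum_ebh_psi: "(\<Sum>j\<in>{1..m}. ebh_psi \<alpha> m e j) = real (card (ebh_rejections \<alpha> m e))"
proof -
  have "(\<Sum>j\<in>{1..m}. ebh_psi \<alpha> m e j) = (\<Sum>j\<in>{1..m}. of_bool (j \<in> ebh_rejections \<alpha> m e))"
    by (intro sum.cong) (simp_all add: ebh_psi_eq_indicator)
  then show ?thesis
    using ebh_rejections_subset by (simp add: Int_absorb1)
qed

lemma sum_mult_ebh_psi:
  "(\<Sum>j\<in>{1..m}. l j * ebh_psi \<alpha> m e j) = (\<Sum>j\<in>ebh_rejections \<alpha> m e. l j)"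
proof -
  have "(\<Sum>j\<in>{1..m}. l j * ebh_psi \<alpha> m e j)
      = (\<Sum>j\<in>{1..m}. if j \<in> ebh_rejections \<alpha> m e then l j else 0)"
    by (intro sum.cong) (simp_all add: ebh_psi_eq_indicator)
  then show ?thesis
    using ebh_rejections_subset by (simp add: sum.If_cases Int_absorb1)
qed

lemma ebh_rejected_loss_le:
  assumes "j \<in> ebh_rejections \<alpha> m e" and "0 \<le> l" and "0 < \<alpha>"
  shows "l / real (ebh_tau \<alpha> m e) \<le> \<alpha> / real m * (e j * l)"
proof -
  let ?t = "real (ebh_tau \<alpha> m e)"
  have "0 < ?t" using ebh_rejected_e_ge(1)[OF assms(1)] by simp
  moreover have "0 < real m" using assms(1) ebh_rejections_subset by fastforce
  ultimately have "1 \<le> \<alpha> * ?t / real m * e j"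
    using ebh_rejected_e_ge(2)[OF assms(1)] \<open>0 < \<alpha>\<close> by (simp add: field_simps)
  then have "l \<le> \<alpha> * ?t / real m * e j * l"
    using mult_right_mono[OF _ \<open>0 \<le> l\<close>] by fastforce
  with \<open>0 < ?t\<close> show ?thesis by (simp add: field_simps)
qed

lemma ebh_loss_ratio_le:
  assumes "\<And>j. j \<in> {1..m} \<Longrightarrow> 0 \<le> l j" and "0 < \<alpha>"
  shows "ennreal ((\<Sum>j\<in>{1..m}. l j * ebh_psi \<alpha> m e j) / max 1 (\<Sum>j\<in>{1..m}. ebh_psi \<alpha> m e j))
    \<le> ennreal (\<alpha> / real m) * (\<Sum>j\<in>{1..m}. ennreal (e j * l j))"
proof -
  let ?R = "ebh_rejections \<alpha> m e" and ?t = "real (ebh_tau \<alpha> m e)"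
  have l_nonneg: "0 \<le> l j" if "j \<in> ?R" for j
    using that ebh_rejections_subset assms(1) by blast
  have "(\<Sum>j\<in>?R. l j) / max 1 (real (card ?R)) \<le> (\<Sum>j\<in>?R. l j) / ?t"
  proof (cases "?R = {}")
    case False
    then have "0 < ?t" using ebh_rejected_e_ge(1) by fastforce
    then show ?thesis
      using ebh_tau_le_card_rejections[of \<alpha> m e] l_nonneg
      by (intro divide_left_mono sum_nonneg) (auto simp: le_max_iff_disj)
  qed simp
  then have "ennreal ((\<Sum>j\<in>{1..m}. l j * ebh_psi \<alpha> m e j) / max 1 (\<Sum>j\<in>{1..m}. ebh_psi \<alpha> m e j))
      \<le> ennreal ((\<Sum>j\<in>?R. l j) / ?t)"
    by (intro ennreal_leI) (simp only: sum_ebh_psi sum_mult_ebh_psi)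
  also have "\<dots> = ennreal (\<Sum>j\<in>?R. l j / ?t)"
    by (simp add: sum_divide_distrib)
  also have "\<dots> = (\<Sum>j\<in>?R. ennreal (l j / ?t))"
    using l_nonneg by (intro sum_ennreal[symmetric]) simp
  also have "\<dots> \<le> (\<Sum>j\<in>?R. ennreal (\<alpha> / real m) * ennreal (e j * l j))"
  proof (intro sum_mono)
    fix j assume "j \<in> ?R"
    then have "ennreal (l j / ?t) \<le> ennreal (\<alpha> / real m * (e j * l j))"
      using ebh_rejected_loss_le l_nonneg \<open>0 < \<alpha>\<close> by (intro ennreal_leI) blast
    also have "\<dots> = ennreal (\<alpha> / real m) * ennreal (e j * l j)"
      using \<open>0 < \<alpha>\<close> by (intro ennreal_mult') simp
    finally show "ennreal (l j / ?t) \<le> ennreal (\<alpha> / real m) * ennreal (e j * l j)" .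
  qed
  also have "\<dots> \<le> ennreal (\<alpha> / real m) * (\<Sum>j\<in>{1..m}. ennreal (e j * l j))"
    unfolding sum_distrib_left[symmetric]
    by (intro mult_left_mono sum_mono2 ebh_rejections_subset) auto
  finally show ?thesis .
qed

lemma nn_integral_sum_le_card:
  fixes f :: "'i \<Rightarrow> 'a \<Rightarrow> ennreal"
  assumes "\<And>i. i \<in> I \<Longrightarrow> f i \<in> borel_measurable M"
    and "\<And>i. i \<in> I \<Longrightarrow> (\<integral>\<^sup>+ x. f i x \<partial>M) \<le> 1"
  shows "(\<integral>\<^sup>+ x. (\<Sum>i\<in>I. f i x) \<partial>M) \<le> of_nat (card I)"
proof -
  have "(\<integral>\<^sup>+ x. (\<Sum>i\<in>I. f i x) \<partial>M) = (\<Sum>i\<in>I. \<integral>\<^sup>+ x. f i x \<partial>M)"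
    using assms(1) by (rule nn_integral_sum)
  also have "\<dots> \<le> (\<Sum>i\<in>I. 1)"
    using assms(2) by (rule sum_mono)
  finally show ?thesis by simp
qed

theorem theorem3p2:
  fixes M :: "'a measure" and L E :: "nat \<Rightarrow> 'a \<Rightarrow> real" and m :: nat and \<alpha> :: real
  assumes "prob_space M"
    and "\<And>j. j \<in> {1..m} \<Longrightarrow> L j \<in> borel_measurable M"
    and "\<And>j. j \<in> {1..m} \<Longrightarrow> E j \<in> borel_measurable M"
    and "\<And>j x. j \<in> {1..m} \<Longrightarrow> x \<in> space M \<Longrightarrow> L j x \<ge> 0"
    and "\<And>j. j \<in> {1..m} \<Longrightarrow> (AE x in M. E j x \<ge> 0)"
    and "\<And>j. j \<in> {1..m} \<Longrightarrow> (\<integral>\<^sup>+ x. ennreal (E j x * L j x) \<partial>M) \<le> 1"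
    and "0 < \<alpha>" and "\<alpha> < 1"
  shows "(\<integral>\<^sup>+ x. ennreal ((\<Sum>j\<in>{1..m}. L j x * ebh_psi \<alpha> m (\<lambda>i. E i x) j)
                 / max 1 (\<Sum>j\<in>{1..m}. ebh_psi \<alpha> m (\<lambda>i. E i x) j)) \<partial>M) \<le> ennreal \<alpha>"
proof -
  have "(\<integral>\<^sup>+ x. ennreal ((\<Sum>j\<in>{1..m}. L j x * ebh_psi \<alpha> m (\<lambda>i. E i x) j)
                 / max 1 (\<Sum>j\<in>{1..m}. ebh_psi \<alpha> m (\<lambda>i. E i x) j)) \<partial>M)
      \<le> (\<integral>\<^sup>+ x. ennreal (\<alpha> / real m) * (\<Sum>j\<in>{1..m}. ennreal (E j x * L j x)) \<partial>M)"
    using assms(4,7) by (intro nn_integral_mono ebh_loss_ratio_le) auto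
  also have "\<dots> = ennreal (\<alpha> / real m) * (\<integral>\<^sup>+ x. (\<Sum>j\<in>{1..m}. ennreal (E j x * L j x)) \<partial>M)"
    using assms(2,3) by (intro nn_integral_cmult) auto
  also have "\<dots> \<le> ennreal (\<alpha> / real m) * of_nat (card {1..m})"
    using assms(2,3,6) by (intro mult_left_mono nn_integral_sum_le_card) auto
  also have "\<dots> \<le> ennreal \<alpha>"
    using assms(7) by (cases "m = 0") (simp_all add: ennreal_of_nat_eq_real_of_nat flip: ennreal_mult'')
  finally show ?thesis .
qed

end
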